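(* Let $B=\{1,\dots,n\}$ be a set of bidders with nonnegative bids, and for $S\subseteq B$ let $R(S)$ be the revenue of a second-price auction (no reserve) among the bidders in $S$, i.e. the second-highest bid in $S$ (and $0$ if $|S|\le 1$). For $S\subseteq B$, let $\mathbf{b}_S\in\mathbb{R}^n$ be the vector whose first $|S|$ coordinates are the bids of the bidders in $S$ sorted in decreasing order and whose remaining coordinates are $0$. Suppose a revenue attribution $\mathbf{R}_S=(R_1,\dots,R_n)$ assigns to the bidders (in this sorted order) revenue shares satisfying, for every bid vector and every $S$: (1) Symmetry: bidders in $S$ with equal bids receive equal attribution; (2) Linearity: $\mathbf{R}_S = \mathbf{A}\,\mathbf{b}_S$ for a fixed $n\times n$ matrix $\mathbf{A}$ (independent of the bids and of $S$); (3) Conservation of revenue: $\sum_{i\in S} R_i = R(S)$. Then $\mathbf{A}$ is uniquely determined: its first column is $0$; its second column is $(\tfrac12,\tfrac12,0,\dots,0)^T$; and for $3\le j\le n$ its $j$-th column has entries $-\frac{1}{j(j-1)}$ in rows $1,\dots,j-1$, entry $\frac{1}{j}$ in row $j$, and $0$ in rows $j+1,\dots,n$. Equivalently, $\mathbf{A}\mathbf{e}_1=0$ and $\mathbf{A}\mathbf{e}_k=\frac1k\mathbf{e}_k$ for $k=2,\dots,n$, where $\mathbf{e}_k$ has ones in its first $k$ positions and zeros elsewhere.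
   Context: Bids are indexed by order statistics $b_{(1)}\ge b_{(2)}\ge\cdots$; the attribution vector $\mathbf{R}_S$ is indexed in the same sorted order, with entries outside the first $|S|$ positions corresponding to absent bidders. *)

theory Defs
  imports Complex_Main
begin

text \<open>Bidders are 1..n; a bid vector is b :: nat => real (only values on {1..n} matter).
  Vectors in R^n are nat => real indexed by 1..n, matrices nat => nat => real indexed by 1..n.\<close>

definition sorted_bids :: "(nat \<Rightarrow> real) \<Rightarrow> nat set \<Rightarrow> real list" where
  "sorted_bids b S = rev (sort (map b (sorted_list_of_set S)))"

definition bvec :: "(nat \<Rightarrow> real) \<Rightarrow> nat set \<Rightarrow> nat \<Rightarrow> real" where
  "bvec b S i = (if 1 \<le> i \<and> i \<le> card S then sorted_bids b S ! (i - 1) else 0)"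

definition second_price :: "(nat \<Rightarrow> real) \<Rightarrow> nat set \<Rightarrow> real" where
  "second_price b S = (if card S \<le> 1 then 0 else sorted_bids b S ! 1)"

definition mat_vec :: "nat \<Rightarrow> (nat \<Rightarrow> nat \<Rightarrow> real) \<Rightarrow> (nat \<Rightarrow> real) \<Rightarrow> nat \<Rightarrow> real" where
  "mat_vec n A x i = (\<Sum>j=1..n. A i j * x j)"

end

theory Submission imports Defs "HOL-Library.Multiset" begin

text \<open>Probe every bidder set \<open>{1..m}\<close> with the bid vector \<open>e\<^sub>k = prefix_ones k\<close> (\<open>k \<le> m\<close>): its sorted bid vector is
  again \<open>e\<^sub>k\<close>, so by linearity each bidder is attributed the \<open>k\<close>-th prefix sum of its row of \<open>A\<close>.
  Symmetry makes the first \<open>k\<close> of these equal, and conservation of the revenue \<open>[k \<ge> 2]\<close> over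
  \<open>{1..k}\<close> fixes them to \<open>[k \<ge> 2]/k\<close>; comparing conservation over \<open>{1..i}\<close> and \<open>{1..i-1}\<close> shows
  that the prefix sum of row \<open>i > k\<close> vanishes. Taking differences of consecutive prefix sums
  recovers the columns of \<open>A\<close>.\<close>

definition prefix_ones :: "nat \<Rightarrow> nat \<Rightarrow> real" where
  "prefix_ones k i = (if 1 \<le> i \<and> i \<le> k then 1 else 0)"

lemma sorted_bids_prefix_ones:
  assumes "k \<le> m"
  shows "sorted_bids (prefix_ones k) {1..m} = replicate k 1 @ replicate (m - k) 0"
proof -
  have "sorted_list_of_set {1..m} = [1..<k+1] @ [k+1..<m+1]"
    using assms upt_add_eq_append[of 1 "k+1" "m-k"]
    by (simp flip: atLeastLessThanSuc_atLeastAtMost)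
  moreover have "map (prefix_ones k) [1..<k+1] = replicate k 1"
    by (rule nth_equalityI) (auto simp: prefix_ones_def nth_upt simp del: upt_Suc)
  moreover have "map (prefix_ones k) [k+1..<m+1] = replicate (m - k) 0"
    by (rule nth_equalityI) (auto simp: prefix_ones_def nth_upt simp del: upt_Suc)
  moreover have "sort (replicate k (1::real) @ replicate (m - k) 0) = replicate (m - k) 0 @ replicate k 1"
    by (rule properties_for_sort) (auto simp: sorted_append union_commute)
  ultimately show ?thesis
    unfolding sorted_bids_def by simp
qed

lemma bvec_prefix_ones:
  assumes "k \<le> m"
  shows "bvec (prefix_ones k) {1..m} = prefix_ones k"
  using assms unfolding bvec_def sorted_bids_prefix_ones[OF assms]
  by (auto simp: nth_append prefix_ones_def fun_eq_iff)

lemma second_price_prefix_ones: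
  assumes "k \<le> m"
  shows "second_price (prefix_ones k) {1..m} = (if 2 \<le> k then 1 else 0)"
  using assms unfolding second_price_def sorted_bids_prefix_ones[OF assms]
  by (auto simp: nth_append)

lemma mat_vec_prefix_ones:
  assumes "k \<le> n"
  shows "mat_vec n A (prefix_ones k) i = (\<Sum>j=1..k. A i j)"
proof -
  have "mat_vec n A (prefix_ones k) i = (\<Sum>j\<in>{1..n}. if j \<in> {1..k} then A i j else 0)"
    unfolding mat_vec_def prefix_ones_def by (rule sum.cong) auto
  also have "\<dots> = (\<Sum>j=1..k. A i j)"
    using assms by (simp add: sum.If_cases Int_absorb1 del: atLeastAtMost_iff)
  finally show ?thesis .
qed

lemma sum_atLeastAtMost_last_diff:
  fixes f :: "nat \<Rightarrow> 'a::ab_group_add"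
  assumes "1 \<le> j"
  shows "f j = (\<Sum>l=1..j. f l) - (\<Sum>l=1..j-1. f l)"
  using assms sum.cl_ivl_Suc[of f 1 "j-1"] by simp

locale revenue_attribution =
  fixes n :: nat
    and A :: "nat \<Rightarrow> nat \<Rightarrow> real"
    and R :: "(nat \<Rightarrow> real) \<Rightarrow> nat set \<Rightarrow> nat \<Rightarrow> real"
  assumes symmetry: "\<And>b S i j. (\<forall>k\<in>{1..n}. b k \<ge> 0) \<Longrightarrow> S \<subseteq> {1..n} \<Longrightarrow>
              i \<in> {1..card S} \<Longrightarrow> j \<in> {1..card S} \<Longrightarrow> bvec b S i = bvec b S j \<Longrightarrow>
              R b S i = R b S j"
    and linearity: "\<And>b S i. (\<forall>k\<in>{1..n}. b k \<ge> 0) \<Longrightarrow> S \<subseteq> {1..n} \<Longrightarrow>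
              i \<in> {1..n} \<Longrightarrow> R b S i = mat_vec n A (bvec b S) i"
    and conservation: "\<And>b S. (\<forall>k\<in>{1..n}. b k \<ge> 0) \<Longrightarrow> S \<subseteq> {1..n} \<Longrightarrow>
              (\<Sum>i=1..card S. R b S i) = second_price b S"
begin

lemma prefix_ones_nonneg: "\<forall>x\<in>{1..n}. prefix_ones k x \<ge> 0"
  by (simp add: prefix_ones_def)

lemma attribution_prefix_ones:
  assumes "k \<le> m" "m \<le> n" "i \<in> {1..n}"
  shows "R (prefix_ones k) {1..m} i = (\<Sum>j=1..k. A i j)"
proof -
  have "R (prefix_ones k) {1..m} i = mat_vec n A (bvec (prefix_ones k) {1..m}) i"
    using assms by (intro linearity prefix_ones_nonneg) auto
  also have "\<dots> = mat_vec n A (prefix_ones k) i"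
    by (simp only: bvec_prefix_ones[OF assms(1)])
  finally show ?thesis
    using assms by (simp add: mat_vec_prefix_ones)
qed

lemma sum_row_prefix_sums:
  assumes "k \<le> m" "m \<le> n"
  shows "(\<Sum>i=1..m. \<Sum>j=1..k. A i j) = (if 2 \<le> k then 1 else 0)"
proof -
  have "(\<Sum>i=1..m. \<Sum>j=1..k. A i j) = (\<Sum>i=1..m. R (prefix_ones k) {1..m} i)"
    using assms attribution_prefix_ones by (intro sum.cong) simp_all
  also have "\<dots> = second_price (prefix_ones k) {1..m}"
    using conservation[OF prefix_ones_nonneg, of "{1..m}"] assms by simp
  also have "\<dots> = (if 2 \<le> k then 1 else 0)"
    by (rule second_price_prefix_ones) (fact assms)
  finally show ?thesis .
qed

lemma row_prefix_sum_eq_first: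
  assumes "k \<le> n" "i \<in> {1..k}"
  shows "(\<Sum>j=1..k. A i j) = (\<Sum>j=1..k. A 1 j)"
proof -
  have "bvec (prefix_ones k) {1..k} i = bvec (prefix_ones k) {1..k} 1"
    using assms unfolding bvec_prefix_ones[OF order_refl] prefix_ones_def by simp
  then have "R (prefix_ones k) {1..k} i = R (prefix_ones k) {1..k} 1"
    using assms by (intro symmetry prefix_ones_nonneg) auto
  with assms show ?thesis
    using attribution_prefix_ones[of k k i] attribution_prefix_ones[of k k 1] by simp
qed

lemma row_prefix_sum:
  assumes "k \<in> {1..n}" "i \<in> {1..n}"
  shows "(\<Sum>j=1..k. A i j) = (if i \<le> k \<and> 2 \<le> k then 1 / real k else 0)"
proof (cases "i \<le> k")
  case True
  have "(\<Sum>i'=1..k. \<Sum>j=1..k. A i' j) = (\<Sum>i'=1..k. \<Sum>j=1..k. A 1 j)"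
    using assms by (intro sum.cong[OF refl] row_prefix_sum_eq_first) auto
  then have "real k * (\<Sum>j=1..k. A 1 j) = (if 2 \<le> k then 1 else 0)"
    using sum_row_prefix_sums[of k k] assms by simp
  then have "(\<Sum>j=1..k. A 1 j) = (if 2 \<le> k then 1 / real k else 0)"
    using assms by (auto simp: field_simps)
  with True assms show ?thesis
    using row_prefix_sum_eq_first[of k i] by simp
next
  case False
  then have "(\<Sum>j=1..k. A i j) = (\<Sum>i'=1..i. \<Sum>j=1..k. A i' j) - (\<Sum>i'=1..i-1. \<Sum>j=1..k. A i' j)"
    using sum_atLeastAtMost_last_diff[of i] assms by simp
  also have "\<dots> = 0"
    using False assms sum_row_prefix_sums[of k i] sum_row_prefix_sums[of k "i-1"] by simp
  finally show ?thesis
    using False by simp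
qed

lemma matrix_entry:
  assumes "i \<in> {1..n}" "j \<in> {1..n}"
  shows "A i j = (if j = 1 then 0
            else if j = 2 then (if i \<le> 2 then 1/2 else 0)
            else if i < j then - 1 / (real j * (real j - 1))
            else if i = j then 1 / real j
            else 0)"
proof -
  have A_diff: "A i j = (\<Sum>l=1..j. A i l) - (\<Sum>l=1..j-1. A i l)"
    using assms sum_atLeastAtMost_last_diff[of j] by simp
  show ?thesis
  proof (cases "j = 1")
    case True
    with assms show ?thesis
      using row_prefix_sum[of 1 i] by simp
  next
    case False
    with assms have "j - 1 \<in> {1..n}"
      by auto
    then have "A i j = (if i \<le> j then 1 / real j else 0)
                 - (if i \<le> j - 1 \<and> 3 \<le> j then 1 / (real j - 1) else 0)"
      using A_diff assms row_prefix_sum[of j i] row_prefix_sum[of "j-1" i]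
      by (auto simp: of_nat_diff)
    moreover have "1 / real j - 1 / (real j - 1) = - 1 / (real j * (real j - 1))"
      using False assms by (auto simp: field_simps)
    ultimately show ?thesis
      using False assms by auto
  qed
qed

end

theorem proposition3:
  fixes n :: nat
    and A :: "nat \<Rightarrow> nat \<Rightarrow> real"
    and R :: "(nat \<Rightarrow> real) \<Rightarrow> nat set \<Rightarrow> nat \<Rightarrow> real"
  assumes symmetry: "\<And>b S i j. (\<forall>k\<in>{1..n}. b k \<ge> 0) \<Longrightarrow> S \<subseteq> {1..n} \<Longrightarrow>
              i \<in> {1..card S} \<Longrightarrow> j \<in> {1..card S} \<Longrightarrow> bvec b S i = bvec b S j \<Longrightarrow>
              R b S i = R b S j"
    and linearity: "\<And>b S i. (\<forall>k\<in>{1..n}. b k \<ge> 0) \<Longrightarrow> S \<subseteq> {1..n} \<Longrightarrow>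
              i \<in> {1..n} \<Longrightarrow> R b S i = mat_vec n A (bvec b S) i"
    and conservation: "\<And>b S. (\<forall>k\<in>{1..n}. b k \<ge> 0) \<Longrightarrow> S \<subseteq> {1..n} \<Longrightarrow>
              (\<Sum>i=1..card S. R b S i) = second_price b S"
  shows "\<forall>i\<in>{1..n}. \<forall>j\<in>{1..n}. A i j =
           (if j = 1 then 0
            else if j = 2 then (if i \<le> 2 then 1/2 else 0)
            else if i < j then - 1 / (real j * (real j - 1))
            else if i = j then 1 / real j
            else 0)"
proof -
  interpret revenue_attribution n A R
    using symmetry linearity conservation by unfold_locales
  show ?thesis
    by (blast intro: matrix_entry)
qed

end
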